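(* Normalize $\operatorname{var}(X)=1$ and $\operatorname{var}(W_1)=I_{d_1}$, and suppose $\operatorname{var}(Y,X,W_1)$ is positive definite. Let $r_X,r_Y,c\in\mathbb R^{d_1}$ and $b\ne\beta_{\text{med}}$. Then $b\in\mathcal B(r_X,r_Y,c)$ if and only if there exists $z\in\mathbb R\setminus\{0\}$ such that $k_1-bk_0=r_Y'\big(z\sqrt{1-\|c\|^2}(\sigma_{W_1,Y}-b\sigma_{W_1,X})-(k_1-bk_0)c\big)$, $z=r_X'\big(\sqrt{1-\|c\|^2}\sigma_{W_1,X}-cz\big)$, $z^2<k_0$, $(b-\beta_{\text{med}})^2<\text{devsq}(z)$, and $\|c\|^2<1$.
   Context: For random vectors $A,B$ with $\operatorname{var}(B)$ invertible, $A^{\perp B}=A-\operatorname{cov}(A,B)\operatorname{var}(B)^{-1}B$. $\sigma_{A,B}=\operatorname{cov}(A,B)$. $\beta_{\text{med}}$ is the coefficient on $X$ in the linear projection of $Y$ on $(1,X,W_1)$. $k_0=\operatorname{var}(X^{\perp W_1})$, $k_1=\operatorname{cov}(Y^{\perp W_1},X^{\perp W_1})$; $\text{devsq}(z)=\frac{\operatorname{var}(Y^{\perp X,W_1})}{k_0}\frac{z^2}{k_0-z^2}$. For $r_X,r_Y,c\in\mathbb R^{d_1}$, $\mathcal B(r_X,r_Y,c)$ is the set of $b\in\mathbb R$ such that for some $(p_1,g_1)\in\mathbb R^{d_1}\times\mathbb R^{d_1}$ (with $\Sigma_{\text{obs}}=\operatorname{var}(W_1)$): $\operatorname{cov}(Y,X)=b\operatorname{var}(X)+g_1'(\Sigma_{\text{obs}}+cr_X'+r_Yc'+r_Yr_X')p_1$;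 $\operatorname{cov}(Y,W_1)=b\operatorname{cov}(X,W_1)+g_1'(\Sigma_{\text{obs}}+r_Yc')$; $\operatorname{cov}(X,W_1)=p_1'(\Sigma_{\text{obs}}+r_Xc')$; $\operatorname{var}(Y)>b^2\operatorname{var}(X)+g_1'(\Sigma_{\text{obs}}+r_Yr_Y'+2r_Yc')g_1+2bg_1'(\Sigma_{\text{obs}}+cr_X'+r_Yc'+r_Yr_X')p_1$; $\operatorname{var}(X)>p_1'(\Sigma_{\text{obs}}+2r_Xc'+r_Xr_X')p_1$; $1>c'\Sigma_{\text{obs}}^{-1}c$. *)

theory Defs
  imports "HOL-Analysis.Analysis"
begin

text \<open>Second-moment model of the random vector (Y, X, W1): all quantities in the
statement depend only on the covariance matrix of (Y, X, W1), which is given by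
vY = var Y, vX = var X, covYX = cov(Y,X), covYW = cov(Y,W1) = cov(W1,Y),
covXW = cov(X,W1) = cov(W1,X), Sig = var W1 (a d1 x d1 matrix, d1 = CARD('d)).\<close>

definition outer :: "real^'n \<Rightarrow> real^'m \<Rightarrow> real^'m^'n" where
  "outer u v = (\<chi> i j. u$i * v$j)"

definition joint_var_posdef ::
  "real \<Rightarrow> real \<Rightarrow> real \<Rightarrow> real^'d \<Rightarrow> real^'d \<Rightarrow> real^'d^'d \<Rightarrow> bool" where
  "joint_var_posdef vY vX covYX covYW covXW Sig \<longleftrightarrow>
     (\<forall>a b (v::real^'d). (a, b, v) \<noteq> (0, 0, 0) \<longrightarrow>
        a^2 * vY + b^2 * vX + v \<bullet> (Sig *v v) + 2*a*b*covYX + 2*a*(covYW \<bullet> v)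
        + 2*b*(covXW \<bullet> v) > 0)"

text \<open>var((X,W1)), indexed by 'd option (None = X, Some i = i-th component of W1).\<close>
definition varXW :: "real \<Rightarrow> real^'d \<Rightarrow> real^'d^'d \<Rightarrow> real^('d option)^('d option)" where
  "varXW vX covXW Sig = (\<chi> i j. case i of
       None \<Rightarrow> (case j of None \<Rightarrow> vX | Some j' \<Rightarrow> covXW$j')
     | Some i' \<Rightarrow> (case j of None \<Rightarrow> covXW$i' | Some j' \<Rightarrow> Sig$i'$j'))"

definition covXWY :: "real \<Rightarrow> real^'d \<Rightarrow> real^('d option)" where
  "covXWY covYX covYW = (\<chi> i. case i of None \<Rightarrow> covYX | Some i' \<Rightarrow> covYW$i')"

text \<open>Linear projection coefficients of Y on (1, X, W1), restricted to (X, W1):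
var((X,W1))^{-1} cov((X,W1),Y); beta_med is the coefficient on X.\<close>
definition beta_med :: "real \<Rightarrow> real \<Rightarrow> real^'d \<Rightarrow> real^'d \<Rightarrow> real^'d^'d \<Rightarrow> real" where
  "beta_med vX covYX covYW covXW Sig =
     (matrix_inv (varXW vX covXW Sig) *v covXWY covYX covYW) $ None"

definition varY_perp_XW :: "real \<Rightarrow> real \<Rightarrow> real \<Rightarrow> real^'d \<Rightarrow> real^'d \<Rightarrow> real^'d^'d \<Rightarrow> real" where
  "varY_perp_XW vY vX covYX covYW covXW Sig =
     vY - covXWY covYX covYW \<bullet> (matrix_inv (varXW vX covXW Sig) *v covXWY covYX covYW)"

text \<open>k0 = var(X^{perp W1}), k1 = cov(Y^{perp W1}, X^{perp W1}).\<close>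
definition k0 :: "real \<Rightarrow> real^'d \<Rightarrow> real^'d^'d \<Rightarrow> real" where
  "k0 vX covXW Sig = vX - covXW \<bullet> (matrix_inv Sig *v covXW)"

definition k1 :: "real \<Rightarrow> real^'d \<Rightarrow> real^'d \<Rightarrow> real^'d^'d \<Rightarrow> real" where
  "k1 covYX covYW covXW Sig = covYX - covYW \<bullet> (matrix_inv Sig *v covXW)"

definition devsq :: "real \<Rightarrow> real \<Rightarrow> real \<Rightarrow> real^'d \<Rightarrow> real^'d \<Rightarrow> real^'d^'d \<Rightarrow> real \<Rightarrow> real" where
  "devsq vY vX covYX covYW covXW Sig z =
     varY_perp_XW vY vX covYX covYW covXW Sig / k0 vX covXW Sig * (z^2 / (k0 vX covXW Sig - z^2))"

definition Bset :: "real \<Rightarrow> real \<Rightarrow> real \<Rightarrow> real^'d \<Rightarrow> real^'d \<Rightarrow> real^'d^'d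
    \<Rightarrow> real^'d \<Rightarrow> real^'d \<Rightarrow> real^'d \<Rightarrow> real set" where
  "Bset vY vX covYX covYW covXW Sig rX rY c = {b. \<exists>p1 g1 :: real^'d.
     covYX = b * vX + g1 \<bullet> ((Sig + outer c rX + outer rY c + outer rY rX) *v p1) \<and>
     covYW = b *\<^sub>R covXW + (g1 v* (Sig + outer rY c)) \<and>
     covXW = p1 v* (Sig + outer rX c) \<and>
     vY > b^2 * vX + g1 \<bullet> ((Sig + outer rY rY + 2 *\<^sub>R outer rY c) *v g1)
          + 2 * b * (g1 \<bullet> ((Sig + outer c rX + outer rY c + outer rY rX) *v p1)) \<and>
     vX > p1 \<bullet> ((Sig + 2 *\<^sub>R outer rX c + outer rX rX) *v p1) \<and>
     1 > c \<bullet> (matrix_inv Sig *v c)}"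

end

theory Submission imports Defs begin

text \<open>With var(X) = 1 and var(W1) = I every matrix in the definition of B(rX, rY, c) is the
  identity plus rank-one terms along c, rX and rY, so the unknowns p1 and g1 enter only through
  the scalars a = rX'p1 and e = rY'g1: the two linear equations force
  p1 = \<sigma>_{W1,X} - a c and g1 = \<sigma>_{W1,Y} - b \<sigma>_{W1,X} - e c, where a and e solve scalar
  fixed-point equations. Substituting, the remaining conditions become
  k1 - b k0 = a e (1 - |c|^2), a^2 (1 - |c|^2) < k0 and
  e^2 (1 - |c|^2) < var(Y^{perp X,W1}) + k0 (b - \<beta>_med)^2.
  Rescaling z = a sqrt(1 - |c|^2) eliminates e (it is determined because k1 - b k0 \<noteq> 0,
  i.e. b \<noteq> \<beta>_med) and turns the bound on var(Y) into (b - \<beta>_med)^2 < devsq(z).\<close>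

lemma matrix_inv_left:
  fixes A :: "'a::semiring_1^'n^'m"
  assumes "invertible A"
  shows "matrix_inv A ** A = mat 1"
  using someI_ex[OF assms[unfolded invertible_def]] unfolding matrix_inv_def by blast

lemma matrix_inv_mat_1: "matrix_inv (mat 1 :: 'a::semiring_1^'n^'n) = mat 1"
proof -
  have "invertible (mat 1 :: 'a^'n^'n)"
    unfolding invertible_def by (auto intro!: exI[of _ "mat 1"])
  from matrix_inv_left[OF this] show ?thesis by simp
qed

lemma matrix_inv_mult_vector_eq:
  fixes A :: "'a::semiring_1^'n^'m"
  assumes "invertible A" and "A *v x = y"
  shows "matrix_inv A *v y = x"
  using assms by (metis matrix_inv_left matrix_vector_mul_assoc matrix_vector_mul_lid)

lemma outer_mult_vector: "outer u v *v w = (v \<bullet> w) *\<^sub>R u"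
  by (simp add: outer_def matrix_vector_mult_def vec_eq_iff inner_vec_def sum_distrib_left mult_ac)

lemma vector_mult_outer: "w v* outer u v = (w \<bullet> u) *\<^sub>R v"
  by (simp add: outer_def vector_matrix_mult_def vec_eq_iff inner_vec_def
      sum_distrib_right sum_distrib_left mult_ac)

lemma sum_UNIV_option:
  fixes f :: "'a::finite option \<Rightarrow> 'b::comm_monoid_add"
  shows "(\<Sum>i\<in>UNIV. f i) = f None + (\<Sum>j\<in>UNIV. f (Some j))"
  by (simp add: UNIV_option_conv sum.reindex)

lemma inner_vec_option:
  "(u::real^'d::finite option) \<bullet> v = u $ None * v $ None + (\<Sum>j\<in>UNIV. u $ Some j * v $ Some j)"
  by (simp add: inner_vec_def sum_UNIV_option)

lemma varXW_normalized_mult_None: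
  "(varXW 1 s (mat 1) *v x) $ None = x $ None + (\<Sum>j\<in>UNIV. s $ j * x $ Some j)"
  by (simp add: matrix_vector_mult_def varXW_def sum_UNIV_option)

lemma varXW_normalized_mult_Some:
  "(varXW 1 (s::real^'d) (mat 1) *v x) $ Some j = s $ j * x $ None + x $ Some j"
proof -
  have "(\<Sum>k\<in>UNIV. (if j = k then 1 else 0) * x $ Some k) = x $ Some j"
    by (simp add: if_distrib[of "\<lambda>a. a * _"] cong: if_cong)
  then show ?thesis
    by (simp add: matrix_vector_mult_def varXW_def sum_UNIV_option mat_def)
qed

lemma invertible_varXW_normalized:
  assumes "s \<bullet> s < 1"
  shows "invertible (varXW 1 (s::real^'d) (mat 1))"
proof -
  have "x = 0" if kernel: "varXW 1 s (mat 1) *v x = 0" for x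
  proof -
    have Some_eq: "x $ Some j = - s $ j * x $ None" for j
      using arg_cong[OF kernel, of "\<lambda>v. v $ Some j"] by (simp add: varXW_normalized_mult_Some)
    have "x $ None + (\<Sum>j\<in>UNIV. s $ j * x $ Some j) = 0"
      using arg_cong[OF kernel, of "\<lambda>v. v $ None"] by (simp add: varXW_normalized_mult_None)
    then have "x $ None * (1 - s \<bullet> s) = 0"
      by (simp add: Some_eq inner_vec_def sum_distrib_left algebra_simps sum_negf)
    then have "x $ None = 0" using assms by simp
    then show "x = 0"
      unfolding vec_eq_iff by (metis Some_eq mult_zero_right not_Some_eq zero_index)
  qed
  then show ?thesis
    using invertible_left_inverse matrix_left_invertible_ker by blast
qed

lemma varXW_normalized_inv_covXWY:
  fixes s t :: "real^'d" and cYX :: real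
  assumes "s \<bullet> s < 1"
  defines "\<beta> \<equiv> (cYX - t \<bullet> s) / (1 - s \<bullet> s)"
  shows "matrix_inv (varXW 1 s (mat 1)) *v covXWY cYX t =
     (\<chi> i. case i of None \<Rightarrow> \<beta> | Some j \<Rightarrow> t $ j - s $ j * \<beta>)"
proof (rule matrix_inv_mult_vector_eq[OF invertible_varXW_normalized[OF assms(1)]])
  have "\<beta> + (\<Sum>j\<in>UNIV. s $ j * (t $ j - s $ j * \<beta>)) = \<beta> * (1 - s \<bullet> s) + t \<bullet> s"
    by (simp add: inner_vec_def algebra_simps sum_subtractf sum_distrib_left)
  also have "\<dots> = cYX"
    using assms(1) by (simp add: \<beta>_def)
  finally show "varXW 1 s (mat 1) *v (\<chi> i. case i of None \<Rightarrow> \<beta> | Some j \<Rightarrow> t $ j - s $ j * \<beta>) =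
      covXWY cYX t"
    unfolding vec_eq_iff
    by (auto simp: varXW_normalized_mult_None varXW_normalized_mult_Some covXWY_def split: option.split)
qed

lemma beta_med_normalized:
  assumes "s \<bullet> s < 1"
  shows "beta_med 1 cYX t s (mat 1) = (cYX - t \<bullet> s) / (1 - s \<bullet> s)"
  unfolding beta_med_def varXW_normalized_inv_covXWY[OF assms] by simp

lemma varY_perp_XW_normalized:
  assumes "s \<bullet> s < 1"
  shows "varY_perp_XW vY 1 cYX t s (mat 1) = vY - t \<bullet> t - (cYX - t \<bullet> s)^2 / (1 - s \<bullet> s)"
proof -
  define \<beta> where "\<beta> = (cYX - t \<bullet> s) / (1 - s \<bullet> s)"
  have "covXWY cYX t \<bullet> (matrix_inv (varXW 1 s (mat 1)) *v covXWY cYX t)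
      = cYX * \<beta> + t \<bullet> t - (t \<bullet> s) * \<beta>"
    unfolding varXW_normalized_inv_covXWY[OF assms] \<beta>_def[symmetric]
    by (simp add: inner_vec_option covXWY_def inner_vec_def algebra_simps sum_subtractf
        sum_distrib_left)
  also have "\<dots> = t \<bullet> t + (cYX - t \<bullet> s) * \<beta>"
    by (simp add: algebra_simps)
  also have "\<dots> = t \<bullet> t + (cYX - t \<bullet> s)^2 / (1 - s \<bullet> s)"
    by (simp add: \<beta>_def power2_eq_square)
  finally show ?thesis
    unfolding varY_perp_XW_def by simp
qed

lemma k0_normalized: "k0 1 s (mat 1) = 1 - s \<bullet> s"
  by (simp add: k0_def matrix_inv_mat_1)

lemma k1_normalized: "k1 cYX t s (mat 1) = cYX - t \<bullet> s"
  by (simp add: k1_def matrix_inv_mat_1)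

lemma joint_var_posdef_normalized_covXW_less:
  assumes "joint_var_posdef vY 1 cYX t s (mat 1)"
  shows "s \<bullet> s < 1"
proof -
  have "(0::real) < 0^2 * vY + 1^2 * 1 + (- s) \<bullet> (mat 1 *v (- s)) + 2*0*1*cYX
      + 2*0*(t \<bullet> (- s)) + 2*1*(s \<bullet> (- s))"
    using assms unfolding joint_var_posdef_def by (metis prod.inject zero_neq_one)
  then show ?thesis by simp
qed

lemma Bset_normalized_iff:
  fixes s t rX rY c :: "real^'d"
  shows "b \<in> Bset vY 1 cYX t s (mat 1) rX rY c \<longleftrightarrow> (\<exists>a e p g.
     a = rX \<bullet> p \<and> e = rY \<bullet> g \<and>
     cYX = b + (g \<bullet> p + a * (g \<bullet> c) + (c \<bullet> p) * e + a * e) \<and>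
     g = (t - b *\<^sub>R s) - e *\<^sub>R c \<and> p = s - a *\<^sub>R c \<and>
     vY > b^2 + (g \<bullet> g + 2 * (c \<bullet> g) * e + e^2)
        + 2 * b * (g \<bullet> p + a * (g \<bullet> c) + (c \<bullet> p) * e + a * e) \<and>
     1 > p \<bullet> p + 2 * (c \<bullet> p) * a + a^2 \<and> 1 > c \<bullet> c)"
proof -
  have cross: "g \<bullet> ((mat 1 + outer c rX + outer rY c + outer rY rX) *v p) =
      g \<bullet> p + (rX \<bullet> p) * (g \<bullet> c) + (c \<bullet> p) * (rY \<bullet> g) + (rX \<bullet> p) * (rY \<bullet> g)" for g p :: "real^'d"
    by (simp add: matrix_vector_mult_add_rdistrib outer_mult_vector inner_add_right inner_commute)
  have quad_g: "g \<bullet> ((mat 1 + outer rY rY + 2 *\<^sub>R outer rY c) *v g) =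
      g \<bullet> g + 2 * (c \<bullet> g) * (rY \<bullet> g) + (rY \<bullet> g)^2" for g :: "real^'d"
    by (simp add: matrix_vector_mult_add_rdistrib outer_mult_vector scaleR_matrix_vector_assoc[symmetric]
        inner_add_right inner_commute power2_eq_square)
  have quad_p: "p \<bullet> ((mat 1 + 2 *\<^sub>R outer rX c + outer rX rX) *v p) =
      p \<bullet> p + 2 * (c \<bullet> p) * (rX \<bullet> p) + (rX \<bullet> p)^2" for p :: "real^'d"
    by (simp add: matrix_vector_mult_add_rdistrib outer_mult_vector scaleR_matrix_vector_assoc[symmetric]
        inner_add_right inner_commute power2_eq_square)
  have covYW: "t = b *\<^sub>R s + (g v* (mat 1 + outer rY c)) \<longleftrightarrow> g = (t - b *\<^sub>R s) - (rY \<bullet> g) *\<^sub>R c"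
    for g :: "real^'d"
    by (auto simp: vector_matrix_mult_add_rdistrib vector_mult_outer inner_commute algebra_simps)
  have covXW: "s = p v* (mat 1 + outer rX c) \<longleftrightarrow> p = s - (rX \<bullet> p) *\<^sub>R c" for p :: "real^'d"
    by (auto simp: vector_matrix_mult_add_rdistrib vector_mult_outer inner_commute algebra_simps)
  show ?thesis
    unfolding Bset_def mem_Collect_eq cross quad_g quad_p covYW covXW matrix_inv_mat_1
      mult_1_right matrix_vector_mul_lid by blast
qed

lemma inner_shift_square:
  fixes x c :: "'a::real_inner"
  shows "(x - a *\<^sub>R c) \<bullet> (x - a *\<^sub>R c) + 2 * (c \<bullet> (x - a *\<^sub>R c)) * a + a^2
    = x \<bullet> x + a^2 * (1 - c \<bullet> c)"
  by (simp add: inner_diff_left inner_diff_right inner_commute algebra_simps power2_eq_square)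

lemma inner_shift_cross:
  fixes x y c :: "'a::real_inner"
  shows "(y - e *\<^sub>R c) \<bullet> (x - a *\<^sub>R c) + a * ((y - e *\<^sub>R c) \<bullet> c) + (c \<bullet> (x - a *\<^sub>R c)) * e + a * e
    = y \<bullet> x + a * e * (1 - c \<bullet> c)"
  by (simp add: inner_diff_left inner_diff_right inner_commute algebra_simps)

lemma Bset_conditions_shifted_iff:
  fixes s t c p g :: "'a::real_inner"
  assumes p: "p = s - a *\<^sub>R c" and g: "g = (t - b *\<^sub>R s) - e *\<^sub>R c"
  shows "cYX = b + (g \<bullet> p + a * (g \<bullet> c) + (c \<bullet> p) * e + a * e) \<and>
      vY > b^2 + (g \<bullet> g + 2 * (c \<bullet> g) * e + e^2)
        + 2 * b * (g \<bullet> p + a * (g \<bullet> c) + (c \<bullet> p) * e + a * e) \<and>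
      1 > p \<bullet> p + 2 * (c \<bullet> p) * a + a^2 \<and> 1 > c \<bullet> c
    \<longleftrightarrow> cYX - t \<bullet> s - b * (1 - s \<bullet> s) = a * e * (1 - c \<bullet> c) \<and>
      e^2 * (1 - c \<bullet> c) < vY - b^2 - 2 * b * (cYX - b) - (t - b *\<^sub>R s) \<bullet> (t - b *\<^sub>R s) \<and>
      a^2 * (1 - c \<bullet> c) < 1 - s \<bullet> s \<and> c \<bullet> c < 1"
proof -
  define h M where "h = t - b *\<^sub>R s" and "M = g \<bullet> p + a * (g \<bullet> c) + (c \<bullet> p) * e + a * e"
  have "M = h \<bullet> s + a * e * (1 - c \<bullet> c)"
    unfolding M_def p g h_def[symmetric] by (rule inner_shift_cross)
  then have M_iff: "cYX = b + M \<longleftrightarrow> cYX - t \<bullet> s - b * (1 - s \<bullet> s) = a * e * (1 - c \<bullet> c)"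
    by (auto simp: h_def inner_diff_left algebra_simps)
  have "g \<bullet> g + 2 * (c \<bullet> g) * e + e^2 = h \<bullet> h + e^2 * (1 - c \<bullet> c)"
    unfolding g h_def[symmetric] by (rule inner_shift_square)
  then have "vY > b^2 + (g \<bullet> g + 2 * (c \<bullet> g) * e + e^2) + 2 * b * M \<longleftrightarrow>
      e^2 * (1 - c \<bullet> c) < vY - b^2 - 2 * b * (cYX - b) - h \<bullet> h" if "cYX = b + M"
    using that by (simp, linarith)
  moreover have "p \<bullet> p + 2 * (c \<bullet> p) * a + a^2 = s \<bullet> s + a^2 * (1 - c \<bullet> c)"
    unfolding p by (rule inner_shift_square)
  ultimately show ?thesis
    using M_iff unfolding M_def[symmetric] h_def by auto
qed

lemma Bset_normalized_iff_scalars: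
  fixes s t rX rY c :: "real^'d" and b :: real
  defines "h \<equiv> t - b *\<^sub>R s"
  shows "b \<in> Bset vY 1 cYX t s (mat 1) rX rY c \<longleftrightarrow> (\<exists>a e.
     a = rX \<bullet> (s - a *\<^sub>R c) \<and> e = rY \<bullet> (h - e *\<^sub>R c) \<and>
     cYX - t \<bullet> s - b * (1 - s \<bullet> s) = a * e * (1 - c \<bullet> c) \<and>
     e^2 * (1 - c \<bullet> c) < vY - b^2 - 2 * b * (cYX - b) - h \<bullet> h \<and>
     a^2 * (1 - c \<bullet> c) < 1 - s \<bullet> s \<and> c \<bullet> c < 1)"
  unfolding Bset_normalized_iff h_def by (simp add: Bset_conditions_shifted_iff[OF refl refl])

lemma scaled_inner_fixed_point_iff:
  fixes x r c :: "'a::real_inner"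
  assumes "k \<noteq> 0"
  shows "k * a = r \<bullet> (k *\<^sub>R x - (k * a) *\<^sub>R c) \<longleftrightarrow> a = r \<bullet> (x - a *\<^sub>R c)"
proof -
  have "r \<bullet> (k *\<^sub>R x - (k * a) *\<^sub>R c) = k * (r \<bullet> (x - a *\<^sub>R c))"
    by (simp add: inner_diff_right algebra_simps)
  then show ?thesis
    using assms by simp
qed

lemma scalar_conditions_iff_scaled:
  fixes s h rX rY c :: "'a::real_inner"
  assumes c: "c \<bullet> c < 1" and z: "z = sqrt (1 - c \<bullet> c) * a"
    and d: "d = a * e * (1 - c \<bullet> c)" and "d \<noteq> 0"
  shows "a = rX \<bullet> (s - a *\<^sub>R c) \<and> e = rY \<bullet> (h - e *\<^sub>R c) \<and>
      e^2 * (1 - c \<bullet> c) < W \<and> a^2 * (1 - c \<bullet> c) < \<kappa>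
    \<longleftrightarrow> z \<noteq> 0 \<and> d = rY \<bullet> ((z * sqrt (1 - c \<bullet> c)) *\<^sub>R h - d *\<^sub>R c) \<and>
      z = rX \<bullet> (sqrt (1 - c \<bullet> c) *\<^sub>R s - z *\<^sub>R c) \<and> z^2 < \<kappa> \<and> d^2 < W * z^2"
proof -
  define \<sigma> where "\<sigma> = sqrt (1 - c \<bullet> c)"
  have \<sigma>: "\<sigma> > 0" "\<sigma>^2 = 1 - c \<bullet> c"
    using c by (simp_all add: \<sigma>_def)
  have "a \<noteq> 0"
    using \<open>d \<noteq> 0\<close> d by auto
  then have z0: "z \<noteq> 0" and z2: "z^2 > 0"
    using \<sigma> z by (simp_all add: \<sigma>_def)
  have d_z: "d = (z * \<sigma>) * e"
    using z d \<sigma>(2) by (simp add: \<sigma>_def power2_eq_square)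
  have z_sq: "z^2 = a^2 * (1 - c \<bullet> c)"
    using z \<sigma>(2) by (simp add: \<sigma>_def power_mult_distrib)
  have "d^2 = (e^2 * (1 - c \<bullet> c)) * (a^2 * (1 - c \<bullet> c))"
    using d by (simp add: power2_eq_square mult_ac)
  then have "d^2 = (e^2 * (1 - c \<bullet> c)) * z^2"
    using z_sq by simp
  then have "e^2 * (1 - c \<bullet> c) < W \<longleftrightarrow> d^2 < W * z^2"
    using z2 by simp
  moreover have "e = rY \<bullet> (h - e *\<^sub>R c) \<longleftrightarrow> d = rY \<bullet> ((z * \<sigma>) *\<^sub>R h - d *\<^sub>R c)"
    using scaled_inner_fixed_point_iff[of "z * \<sigma>" e rY h c] z0 \<sigma> d_z by simp
  moreover have "a = rX \<bullet> (s - a *\<^sub>R c) \<longleftrightarrow> z = rX \<bullet> (\<sigma> *\<^sub>R s - z *\<^sub>R c)"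
    using scaled_inner_fixed_point_iff[of \<sigma> a rX s c] \<sigma> z by (simp add: \<sigma>_def)
  ultimately show ?thesis
    using z0 z_sq unfolding \<sigma>_def by auto
qed

lemma ex_scalars_iff_ex_scaled:
  fixes s h rX rY c :: "'a::real_inner"
  assumes "d \<noteq> 0"
  shows "(\<exists>a e. a = rX \<bullet> (s - a *\<^sub>R c) \<and> e = rY \<bullet> (h - e *\<^sub>R c) \<and>
      d = a * e * (1 - c \<bullet> c) \<and> e^2 * (1 - c \<bullet> c) < W \<and> a^2 * (1 - c \<bullet> c) < \<kappa> \<and> c \<bullet> c < 1)
    \<longleftrightarrow> (\<exists>z. z \<noteq> 0 \<and> d = rY \<bullet> ((z * sqrt (1 - (norm c)^2)) *\<^sub>R h - d *\<^sub>R c) \<and>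
      z = rX \<bullet> (sqrt (1 - (norm c)^2) *\<^sub>R s - z *\<^sub>R c) \<and> z^2 < \<kappa> \<and> d^2 < W * z^2 \<and> (norm c)^2 < 1)"
  (is "(\<exists>a e. ?A a e) \<longleftrightarrow> (\<exists>z. ?Z z)")
proof
  assume "\<exists>a e. ?A a e"
  then obtain a e where A: "?A a e" by blast
  then have c: "c \<bullet> c < 1" and d: "d = a * e * (1 - c \<bullet> c)" by auto
  have "?Z (sqrt (1 - c \<bullet> c) * a)"
    using scalar_conditions_iff_scaled[OF c refl d assms, where rX = rX and s = s and rY = rY
        and h = h and W = W and \<kappa> = \<kappa>] A c
    by (simp add: power2_norm_eq_inner)
  then show "\<exists>z. ?Z z" ..
next
  assume "\<exists>z. ?Z z"
  then obtain z where Z: "?Z z" by blast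
  define \<sigma> where "\<sigma> = sqrt (1 - c \<bullet> c)"
  have c: "c \<bullet> c < 1" and \<sigma>: "\<sigma> > 0" "\<sigma>^2 = 1 - c \<bullet> c"
    using Z by (simp_all add: \<sigma>_def power2_norm_eq_inner)
  have "z = \<sigma> * (z / \<sigma>)" and "d = (z / \<sigma>) * (d / (z * \<sigma>)) * (1 - c \<bullet> c)"
    unfolding \<sigma>(2)[symmetric] using \<sigma> Z by (auto simp: field_simps power2_eq_square)
  then have "?A (z / \<sigma>) (d / (z * \<sigma>))"
    using scalar_conditions_iff_scaled[of c z "z / \<sigma>" d "d / (z * \<sigma>)", where rX = rX and s = s
        and rY = rY and h = h and W = W and \<kappa> = \<kappa>] Z c assms
    by (simp add: \<sigma>_def power2_norm_eq_inner)
  then show "\<exists>a e. ?A a e" by blast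
qed

lemma less_devsq_iff:
  fixes K V D z :: real
  assumes "K > 0" and "z \<noteq> 0" and "z^2 < K"
  shows "(K * D)^2 < (V + K * D^2) * z^2 \<longleftrightarrow> D^2 < V / K * (z^2 / (K - z^2))"
proof -
  have "(K * D)^2 < (V + K * D^2) * z^2 \<longleftrightarrow> D^2 * (K * (K - z^2)) < V * z^2"
    by (simp add: algebra_simps power2_eq_square)
  also have "\<dots> \<longleftrightarrow> D^2 < V * z^2 / (K * (K - z^2))"
    using assms by (simp add: pos_less_divide_eq)
  finally show ?thesis by simp
qed

lemma Bset_normalized_iff_devsq:
  fixes s t rX rY c :: "real^'d" and cYX vY b :: real
  defines "K0 \<equiv> 1 - s \<bullet> s" and "K1 \<equiv> cYX - t \<bullet> s"
  assumes s: "s \<bullet> s < 1" and b: "b \<noteq> K1 / K0"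
  shows "b \<in> Bset vY 1 cYX t s (mat 1) rX rY c \<longleftrightarrow> (\<exists>z. z \<noteq> 0 \<and>
      K1 - b * K0 = rY \<bullet> ((z * sqrt (1 - (norm c)^2)) *\<^sub>R (t - b *\<^sub>R s) - (K1 - b * K0) *\<^sub>R c) \<and>
      z = rX \<bullet> (sqrt (1 - (norm c)^2) *\<^sub>R s - z *\<^sub>R c) \<and> z^2 < K0 \<and>
      (b - K1 / K0)^2 < (vY - t \<bullet> t - K1^2 / K0) / K0 * (z^2 / (K0 - z^2)) \<and> (norm c)^2 < 1)"
proof -
  define h D V where "h = t - b *\<^sub>R s" and "D = b - K1 / K0" and "V = vY - t \<bullet> t - K1^2 / K0"
  have K0: "K0 > 0"
    using s by (simp add: K0_def)
  then have "K1 - b * K0 = - (K0 * D)"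
    by (simp add: D_def field_simps)
  then have d0: "K1 - b * K0 \<noteq> 0" and d2: "(K1 - b * K0)^2 = (K0 * D)^2"
    using b K0 by (simp_all add: D_def)
  have "h \<bullet> h = t \<bullet> t - 2 * b * (t \<bullet> s) + b^2 * (s \<bullet> s)"
    by (simp add: h_def inner_diff_left inner_diff_right inner_commute power2_eq_square algebra_simps)
  then have "vY - b^2 - 2 * b * (cYX - b) - h \<bullet> h = vY - t \<bullet> t + K0 * b^2 - 2 * b * K1"
    by (simp add: K0_def K1_def algebra_simps power2_eq_square)
  also have "\<dots> = V + K0 * D^2"
    using K0 by (simp add: V_def D_def field_simps power2_eq_square)
  finally have W: "vY - b^2 - 2 * b * (cYX - b) - h \<bullet> h = V + K0 * D^2" .
  have "b \<in> Bset vY 1 cYX t s (mat 1) rX rY c \<longleftrightarrow> (\<exists>z. z \<noteq> 0 \<and>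
      K1 - b * K0 = rY \<bullet> ((z * sqrt (1 - (norm c)^2)) *\<^sub>R h - (K1 - b * K0) *\<^sub>R c) \<and>
      z = rX \<bullet> (sqrt (1 - (norm c)^2) *\<^sub>R s - z *\<^sub>R c) \<and> z^2 < K0 \<and>
      (K0 * D)^2 < (V + K0 * D^2) * z^2 \<and> (norm c)^2 < 1)"
    unfolding Bset_normalized_iff_scalars h_def[symmetric] W K0_def[symmetric] K1_def[symmetric]
    unfolding ex_scalars_iff_ex_scaled[OF d0] d2 by (simp add: mult.commute)
  also have "\<dots> \<longleftrightarrow> (\<exists>z. z \<noteq> 0 \<and>
      K1 - b * K0 = rY \<bullet> ((z * sqrt (1 - (norm c)^2)) *\<^sub>R h - (K1 - b * K0) *\<^sub>R c) \<and>
      z = rX \<bullet> (sqrt (1 - (norm c)^2) *\<^sub>R s - z *\<^sub>R c) \<and> z^2 < K0 \<and>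
      D^2 < V / K0 * (z^2 / (K0 - z^2)) \<and> (norm c)^2 < 1)"
    using less_devsq_iff[OF K0] by blast
  finally show ?thesis
    unfolding h_def D_def V_def .
qed

theorem mainTheorem17:
  fixes vY covYX b :: real and covYW covXW rX rY c :: "real^'d"
  assumes pd: "joint_var_posdef vY 1 covYX covYW covXW (mat 1)"
    and bne: "b \<noteq> beta_med 1 covYX covYW covXW (mat 1)"
  shows "b \<in> Bset vY 1 covYX covYW covXW (mat 1) rX rY c \<longleftrightarrow>
    (\<exists>z::real. z \<noteq> 0 \<and>
      k1 covYX covYW covXW (mat 1) - b * k0 1 covXW (mat 1) =
        rY \<bullet> ((z * sqrt (1 - (norm c)^2)) *\<^sub>R (covYW - b *\<^sub>R covXW)
               - (k1 covYX covYW covXW (mat 1) - b * k0 1 covXW (mat 1)) *\<^sub>R c) \<and>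
      z = rX \<bullet> (sqrt (1 - (norm c)^2) *\<^sub>R covXW - z *\<^sub>R c) \<and>
      z^2 < k0 1 covXW (mat 1) \<and>
      (b - beta_med 1 covYX covYW covXW (mat 1))^2 < devsq vY 1 covYX covYW covXW (mat 1) z \<and>
      (norm c)^2 < 1)"
proof -
  have s: "covXW \<bullet> covXW < 1"
    using joint_var_posdef_normalized_covXW_less[OF pd] .
  show ?thesis
    using Bset_normalized_iff_devsq[OF s bne[unfolded beta_med_normalized[OF s]]]
    unfolding devsq_def k0_normalized k1_normalized beta_med_normalized[OF s] varY_perp_XW_normalized[OF s] .
qed

end
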